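(* Let $a,b,c,k,m>0$ and consider the system $$\frac{dx}{dt}=bx(1-x-cy),\qquad \frac{dy}{dt}=y\Big(\frac{1}{1+kx}-y-ax-mxy\Big).$$ Suppose $0<c<1$ and $0<k<\frac1a-1$. Then the locally stable positive equilibrium $E_{2*}=(x^*,y^* )$ (with $x^*,y^*>0$) of the system is globally stable, i.e. every solution with $x(0)>0$, $y(0)>0$ converges to $E_{2*}$ as $t\to\infty$.
   Context: All parameters are positive. A positive equilibrium is an equilibrium with both coordinates positive; $E_{2*}$ denotes the positive equilibrium that is a stable node. *)

theory Defs
  imports "HOL-Analysis.Analysis"
begin

definition fx :: "real \<Rightarrow> real \<Rightarrow> real \<Rightarrow> real \<Rightarrow> real \<Rightarrow> real \<Rightarrow> real \<Rightarrow> real" where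
  "fx a b c k m x y = b * x * (1 - x - c * y)"

definition fy :: "real \<Rightarrow> real \<Rightarrow> real \<Rightarrow> real \<Rightarrow> real \<Rightarrow> real \<Rightarrow> real \<Rightarrow> real" where
  "fy a b c k m x y = y * (1 / (1 + k * x) - y - a * x - m * x * y)"

definition J11 :: "real \<Rightarrow> real \<Rightarrow> real \<Rightarrow> real \<Rightarrow> real \<Rightarrow> real \<Rightarrow> real \<Rightarrow> real" where
  "J11 a b c k m x y = b * (1 - 2 * x - c * y)"

definition J12 :: "real \<Rightarrow> real \<Rightarrow> real \<Rightarrow> real \<Rightarrow> real \<Rightarrow> real \<Rightarrow> real \<Rightarrow> real" where
  "J12 a b c k m x y = - b * c * x"

definition J21 :: "real \<Rightarrow> real \<Rightarrow> real \<Rightarrow> real \<Rightarrow> real \<Rightarrow> real \<Rightarrow> real \<Rightarrow> real" where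
  "J21 a b c k m x y = y * (- k / (1 + k * x)^2 - a - m * y)"

definition J22 :: "real \<Rightarrow> real \<Rightarrow> real \<Rightarrow> real \<Rightarrow> real \<Rightarrow> real \<Rightarrow> real \<Rightarrow> real" where
  "J22 a b c k m x y = 1 / (1 + k * x) - 2 * y - a * x - 2 * m * x * y"

definition pos_equilibrium :: "real \<Rightarrow> real \<Rightarrow> real \<Rightarrow> real \<Rightarrow> real \<Rightarrow> real \<Rightarrow> real \<Rightarrow> bool" where
  "pos_equilibrium a b c k m x y \<longleftrightarrow>
     x > 0 \<and> y > 0 \<and> fx a b c k m x y = 0 \<and> fy a b c k m x y = 0"

text \<open>Stable node: the Jacobian has two real negative eigenvalues
  (trace < 0, determinant > 0, nonnegative discriminant).\<close>

definition stable_node :: "real \<Rightarrow> real \<Rightarrow> real \<Rightarrow> real \<Rightarrow> real \<Rightarrow> real \<Rightarrow> real \<Rightarrow> bool" where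
  "stable_node a b c k m x y \<longleftrightarrow>
     (let p = J11 a b c k m x y; q = J12 a b c k m x y;
          r = J21 a b c k m x y; s = J22 a b c k m x y;
          tr = p + s; det = p * s - q * r
      in tr < 0 \<and> det > 0 \<and> tr^2 - 4 * det \<ge> 0)"

definition is_solution :: "real \<Rightarrow> real \<Rightarrow> real \<Rightarrow> real \<Rightarrow> real \<Rightarrow> (real \<Rightarrow> real) \<Rightarrow> (real \<Rightarrow> real) \<Rightarrow> bool" where
  "is_solution a b c k m x y \<longleftrightarrow>
     (\<forall>t\<ge>0. (x has_real_derivative fx a b c k m (x t) (y t)) (at t within {0..}) \<and>
             (y has_real_derivative fy a b c k m (x t) (y t)) (at t within {0..}))"

end

theory Submission
  imports Defs "HOL-Real_Asymp.Real_Asymp"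
begin

(* Goh's Volterra-type function V = g (x - xs - xs ln (x/xs)) + (y - ys - ys ln (y/ys)),
   with g = D/(c b) and D = a + m ys + k/(1 + k xs), is a strict Lyapunov function on the open
   quadrant: along solutions V' is a negative definite quadratic form in (x - xs, y - ys),
   because its cross coefficient lies between D and 2 D and D^2 < D/c, i.e. c D < 1, which at
   the equilibrium is equivalent to c < 1.  Since V blows up at the boundary of the quadrant,
   V decreasing keeps x and y above a positive constant; there V is bounded by a multiple of
   the squared distance to (xs, ys), so V' <= - rate V and V decays exponentially, forcing
   x -> xs and y -> ys. *)

definition volterra :: "real \<Rightarrow> real \<Rightarrow> real" where
  "volterra s x = x - s - s * ln (x / s)"

lemma volterra_ge_sqrt_diff_square:
  assumes "0 < s" "0 < x"
  shows "(sqrt x - sqrt s)^2 \<le> volterra s x"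
proof -
  have "ln (sqrt x / sqrt s) \<le> sqrt x / sqrt s - 1"
    using assms by (intro ln_le_minus_one) auto
  moreover have "ln (sqrt x / sqrt s) = ln (x / s) / 2"
    using assms by (simp add: real_sqrt_divide[symmetric] ln_sqrt)
  ultimately have "ln (x / s) \<le> 2 * sqrt x / sqrt s - 2"
    by linarith
  then have "s * ln (x / s) \<le> s * (2 * sqrt x / sqrt s - 2)"
    using assms by (simp add: mult_left_mono)
  also have "\<dots> = 2 * sqrt x * sqrt s - 2 * s"
    using assms by (simp add: field_simps)
  finally show ?thesis
    using assms by (simp add: volterra_def power2_eq_square algebra_simps)
qed

lemma volterra_nonneg: "0 < s \<Longrightarrow> 0 < x \<Longrightarrow> 0 \<le> volterra s x"
  using volterra_ge_sqrt_diff_square[of s x] by (meson order_trans zero_le_power2)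

lemma volterra_le_square_div:
  assumes "0 < s" "0 < \<delta>" "\<delta> \<le> x"
  shows "volterra s x \<le> (x - s)^2 / \<delta>"
proof -
  have "ln (s / x) \<le> s / x - 1"
    using assms by (intro ln_le_minus_one) auto
  then have "s * - ln (x / s) \<le> s * (s / x - 1)"
    using assms by (intro mult_left_mono) (auto simp: ln_div)
  then have "volterra s x \<le> (x - s)^2 / x"
    using assms by (simp add: volterra_def field_simps power2_eq_square)
  also have "\<dots> \<le> (x - s)^2 / \<delta>"
    using assms by (intro divide_left_mono) auto
  finally show ?thesis .
qed

lemma volterra_le_imp_ge:
  assumes "0 < s" "0 < x" "volterra s x \<le> B"
  shows "s * exp (- (B + s) / s) \<le> x"
proof -
  have "- (B + s) / s \<le> ln (x / s)"
    using assms by (simp add: volterra_def field_simps)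
  then have "exp (- (B + s) / s) \<le> x / s"
    using assms by (metis exp_le_cancel_iff exp_ln divide_pos_pos)
  then show ?thesis
    using assms by (simp add: field_simps)
qed

lemma volterra_has_derivative:
  assumes "(f has_real_derivative D) (at t within S)" "0 < s" "0 < f t"
  shows "((\<lambda>t. volterra s (f t)) has_real_derivative D * (f t - s) / f t) (at t within S)"
  unfolding volterra_def
  using assms by (auto intro!: derivative_eq_intros simp: field_simps)

lemma tendsto_of_volterra_tendsto_0:
  assumes "0 < s" and pos: "\<forall>\<^sub>F t in F. 0 < f t" and lim: "((\<lambda>t. volterra s (f t)) \<longlongrightarrow> 0) F"
  shows "(f \<longlongrightarrow> s) F"
proof -
  have "((\<lambda>t. (sqrt (f t) - sqrt s)^2) \<longlongrightarrow> 0) F"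
  proof (rule real_tendsto_sandwich[OF _ _ tendsto_const lim])
    show "\<forall>\<^sub>F t in F. (sqrt (f t) - sqrt s)^2 \<le> volterra s (f t)"
      using pos by eventually_elim (use assms volterra_ge_sqrt_diff_square in auto)
  qed simp
  then have "((\<lambda>t. sqrt ((sqrt (f t) - sqrt s)^2)) \<longlongrightarrow> 0) F"
    using tendsto_real_sqrt by fastforce
  then have "((\<lambda>t. sqrt (f t)) \<longlongrightarrow> sqrt s) F"
    by (simp add: LIM_zero_cancel tendsto_rabs_zero_iff)
  then have "((\<lambda>t. (sqrt (f t))^2) \<longlongrightarrow> s) F"
    using tendsto_power[of _ _ F 2] assms(1) by fastforce
  then show ?thesis
    by (rule Lim_transform_eventually) (use pos in \<open>eventually_elim, simp\<close>)
qed

lemma has_real_derivative_nonpos_imp_le: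
  fixes f f' :: "real \<Rightarrow> real"
  assumes "a \<le> b"
    and "\<And>s. s \<in> {a..b} \<Longrightarrow> (f has_real_derivative f' s) (at s within {a..b})"
    and "\<And>s. s \<in> {a..b} \<Longrightarrow> f' s \<le> 0"
  shows "f b \<le> f a"
proof -
  obtain s where "s \<in> {a..b}" "f b - f a = (b - a) * f' s"
    using mvt_very_simple[OF \<open>a \<le> b\<close>, of f "\<lambda>s h. f' s * h"] assms(2)
    unfolding has_field_derivative_def by auto
  then show ?thesis
    using assms(1,3) mult_nonneg_nonpos[of "b - a" "f' s"] by auto
qed

lemma has_real_derivative_le_neg_mult_imp_exp_decay:
  fixes f f' :: "real \<Rightarrow> real"
  assumes "a \<le> b"
    and deriv: "\<And>s. s \<in> {a..b} \<Longrightarrow> (f has_real_derivative f' s) (at s within {a..b})"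
    and decay: "\<And>s. s \<in> {a..b} \<Longrightarrow> f' s \<le> - l * f s"
  shows "f b \<le> f a * exp (- l * (b - a))"
proof -
  have "f b * exp (l * b) \<le> f a * exp (l * a)"
  proof (rule has_real_derivative_nonpos_imp_le[OF \<open>a \<le> b\<close>])
    fix s assume s: "s \<in> {a..b}"
    show "((\<lambda>s. f s * exp (l * s)) has_real_derivative (f' s + l * f s) * exp (l * s)) (at s within {a..b})"
      using deriv[OF s] by (auto intro!: derivative_eq_intros simp: algebra_simps)
    show "(f' s + l * f s) * exp (l * s) \<le> 0"
      using decay[OF s] by (simp add: mult_nonpos_nonneg)
  qed
  then show ?thesis
    by (simp add: field_simps exp_diff exp_minus)
qed

lemma continuous_ge_while_pos_imp_ge:
  fixes u :: "real \<Rightarrow> real"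
  assumes cont: "continuous_on {0..} u" and "0 < u 0" "0 < \<delta>"
    and bound: "\<And>t. 0 \<le> t \<Longrightarrow> (\<forall>s\<in>{0..t}. 0 < u s) \<Longrightarrow> \<delta> \<le> u t"
    and "0 \<le> t"
  shows "\<delta> \<le> u t"
proof -
  have "0 < u t" if "0 \<le> t" for t
  proof (rule ccontr)
    assume "\<not> 0 < u t"
    define S where "S = {0..} \<inter> u -` {..0}"
    have "closed S"
      unfolding S_def by (intro continuous_closed_preimage cont) auto
    moreover have "t \<in> S" "bdd_below S"
      using \<open>\<not> 0 < u t\<close> that by (auto simp: S_def)
    ultimately have T: "Inf S \<in> S"
      using closed_contains_Inf by blast
    have first: "0 < u s" if "0 \<le> s" "s < Inf S" for s
      using cInf_lower[OF _ \<open>bdd_below S\<close>, of s] that by (force simp: S_def)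
    have "Inf S \<noteq> 0"
      using T \<open>0 < u 0\<close> by (auto simp: S_def)
    then have "0 < Inf S"
      using T by (simp add: S_def)
    have "\<delta> \<le> u (Inf S)"
    proof (rule continuous_ge_on_closure[where f = u and x = "Inf S"])
      show "continuous_on (closure {0..<Inf S}) u"
        using \<open>0 < Inf S\<close> continuous_on_subset[OF cont, of "{0..Inf S}"] by auto
      show "Inf S \<in> closure {0..<Inf S}"
        using \<open>0 < Inf S\<close> by simp
      show "\<delta> \<le> u s" if "s \<in> {0..<Inf S}" for s
        using that by (intro bound) (auto intro: first)
    qed
    then show False
      using T \<open>0 < \<delta>\<close> by (auto simp: S_def)
  qed
  then show ?thesis
    using bound \<open>0 \<le> t\<close> by auto
qed

locale volterra_dissipative_solution =
  fixes F G :: "real \<Rightarrow> real \<Rightarrow> real" and x y :: "real \<Rightarrow> real" and xs ys g \<epsilon> :: real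
  assumes x': "\<And>t. 0 \<le> t \<Longrightarrow> (x has_real_derivative F (x t) (y t)) (at t within {0..})"
    and y': "\<And>t. 0 \<le> t \<Longrightarrow> (y has_real_derivative G (x t) (y t)) (at t within {0..})"
    and x0_pos: "0 < x 0" and y0_pos: "0 < y 0"
    and xs_pos: "0 < xs" and ys_pos: "0 < ys" and g_pos: "0 < g" and \<epsilon>_pos: "0 < \<epsilon>"
    and dissipative: "\<And>X Y. 0 < X \<Longrightarrow> 0 < Y \<Longrightarrow>
      g * F X Y * (X - xs) / X + G X Y * (Y - ys) / Y \<le> - \<epsilon> * ((X - xs)^2 + (Y - ys)^2)"
begin

definition V :: "real \<Rightarrow> real" where
  "V t = g * volterra xs (x t) + volterra ys (y t)"

definition V' :: "real \<Rightarrow> real" where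
  "V' t = g * F (x t) (y t) * (x t - xs) / x t + G (x t) (y t) * (y t - ys) / y t"

lemma V_has_derivative:
  assumes "s \<in> {0..t}" "0 < x s" "0 < y s"
  shows "(V has_real_derivative V' s) (at s within {0..t})"
proof -
  have "(V has_real_derivative V' s) (at s within {0..})"
    using DERIV_add[OF DERIV_cmult[where c = g, OF volterra_has_derivative[OF x'[of s] xs_pos assms(2)]]
        volterra_has_derivative[OF y'[of s] ys_pos assms(3)]] assms(1)
    by (simp add: V_def[abs_def] V'_def mult.assoc)
  then show ?thesis
    by (rule DERIV_subset) auto
qed

lemma V'_le: "0 < x t \<Longrightarrow> 0 < y t \<Longrightarrow> V' t \<le> - \<epsilon> * ((x t - xs)^2 + (y t - ys)^2)"
  using dissipative by (simp add: V'_def)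

lemma V'_nonpos:
  assumes "0 < x t" "0 < y t"
  shows "V' t \<le> 0"
proof -
  have "0 \<le> \<epsilon> * ((x t - xs)^2 + (y t - ys)^2)"
    using \<epsilon>_pos by simp
  then show ?thesis
    using V'_le[OF assms] by linarith
qed

lemma volterra_le_V:
  assumes "0 < x t" "0 < y t"
  shows "0 \<le> volterra xs (x t)" "volterra xs (x t) \<le> V t / g"
    "0 \<le> volterra ys (y t)" "volterra ys (y t) \<le> V t"
  using volterra_nonneg[OF xs_pos assms(1)] volterra_nonneg[OF ys_pos assms(2)] g_pos
  by (auto simp: V_def field_simps)

lemma V_le_V0:
  assumes "0 \<le> t" "\<forall>s\<in>{0..t}. 0 < x s \<and> 0 < y s"
  shows "V t \<le> V 0"
  using has_real_derivative_nonpos_imp_le[OF \<open>0 \<le> t\<close>, of V V'] V_has_derivative V'_nonpos assms(2)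
  by auto

lemma uniformly_positive:
  obtains \<delta> where "0 < \<delta>" "\<And>t. 0 \<le> t \<Longrightarrow> \<delta> \<le> x t \<and> \<delta> \<le> y t"
proof -
  define \<delta> where "\<delta> = min (xs * exp (- (V 0 / g + xs) / xs)) (ys * exp (- (V 0 + ys) / ys))"
  have "0 < \<delta>"
    using xs_pos ys_pos by (simp add: \<delta>_def)
  have cont: "continuous_on {0..} (\<lambda>t. min (x t) (y t))"
    using DERIV_continuous_on[OF x'] DERIV_continuous_on[OF y'] by (intro continuous_on_min) auto
  have "\<delta> \<le> min (x t) (y t)" if "0 \<le> t" for t
  proof (rule continuous_ge_while_pos_imp_ge[OF cont _ \<open>0 < \<delta>\<close> _ that])
    show "0 < min (x 0) (y 0)"
      using x0_pos y0_pos by simp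
    fix t :: real
    assume "0 \<le> t" "\<forall>s\<in>{0..t}. 0 < min (x s) (y s)"
    then have "V t \<le> V 0" "0 < x t" "0 < y t"
      using V_le_V0 by auto
    then have "volterra xs (x t) \<le> V 0 / g" "volterra ys (y t) \<le> V 0"
      using volterra_le_V[of t] divide_right_mono[of "V t" "V 0" g] g_pos by auto
    then show "\<delta> \<le> min (x t) (y t)"
      using volterra_le_imp_ge xs_pos ys_pos \<open>0 < x t\<close> \<open>0 < y t\<close> by (fastforce simp: \<delta>_def)
  qed
  then show ?thesis
    using that \<open>0 < \<delta>\<close> by simp
qed

lemma solution_pos:
  assumes "0 \<le> t"
  shows "0 < x t \<and> 0 < y t"
proof -
  obtain \<delta> where "0 < \<delta>" "\<And>t. 0 \<le> t \<Longrightarrow> \<delta> \<le> x t \<and> \<delta> \<le> y t"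
    using uniformly_positive by blast
  then show ?thesis
    using assms by (meson less_le_trans)
qed

lemma V_le_square_dist:
  assumes "0 < \<delta>" "\<delta> \<le> x t" "\<delta> \<le> y t"
  shows "V t \<le> (g + 1) / \<delta> * ((x t - xs)^2 + (y t - ys)^2)"
proof -
  have "V t \<le> g * ((x t - xs)^2 / \<delta>) + (y t - ys)^2 / \<delta>"
    unfolding V_def using volterra_le_square_div xs_pos ys_pos assms g_pos
    by (intro add_mono mult_left_mono) auto
  also have "\<dots> \<le> (g + 1) / \<delta> * ((x t - xs)^2 + (y t - ys)^2)"
    using g_pos assms(1) by (simp add: field_simps)
  finally show ?thesis .
qed

lemma V_exp_decay:
  obtains rate where "0 < rate" "\<And>t. 0 \<le> t \<Longrightarrow> V t \<le> V 0 * exp (- rate * t)"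
proof -
  obtain \<delta> where "0 < \<delta>" and lower: "\<And>t. 0 \<le> t \<Longrightarrow> \<delta> \<le> x t \<and> \<delta> \<le> y t"
    using uniformly_positive by blast
  define rate where "rate = \<epsilon> * \<delta> / (g + 1)"
  have "0 < rate"
    using \<epsilon>_pos \<open>0 < \<delta>\<close> g_pos by (simp add: rate_def)
  have decay: "V' t \<le> - rate * V t" if "0 \<le> t" for t
  proof -
    have "rate * V t \<le> rate * ((g + 1) / \<delta> * ((x t - xs)^2 + (y t - ys)^2))"
      using V_le_square_dist[OF \<open>0 < \<delta>\<close>] lower[OF that] \<open>0 < rate\<close>
      by (intro mult_left_mono) auto
    also have "\<dots> = \<epsilon> * ((x t - xs)^2 + (y t - ys)^2)"
      using g_pos \<open>0 < \<delta>\<close> by (simp add: rate_def)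
    finally show ?thesis
      using V'_le[of t] solution_pos[OF that] by linarith
  qed
  have "V t \<le> V 0 * exp (- rate * (t - 0))" if "0 \<le> t" for t
  proof (rule has_real_derivative_le_neg_mult_imp_exp_decay[OF that])
    show "(V has_real_derivative V' s) (at s within {0..t})" if "s \<in> {0..t}" for s
      using V_has_derivative solution_pos that by simp
    show "V' s \<le> - rate * V s" if "s \<in> {0..t}" for s
      using decay that by simp
  qed
  with \<open>0 < rate\<close> show ?thesis
    using that by simp
qed

lemma V_nonneg: "0 \<le> t \<Longrightarrow> 0 \<le> V t"
  using volterra_le_V solution_pos by (meson order_trans)

lemma V_tendsto_0: "(V \<longlongrightarrow> 0) at_top"
proof -
  obtain rate where "0 < rate" and decay: "\<And>t. 0 \<le> t \<Longrightarrow> V t \<le> V 0 * exp (- rate * t)"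
    using V_exp_decay by blast
  show ?thesis
  proof (rule real_tendsto_sandwich)
    show "\<forall>\<^sub>F t in at_top. 0 \<le> V t"
      using eventually_ge_at_top[of 0] by (rule eventually_mono) (rule V_nonneg)
    show "\<forall>\<^sub>F t in at_top. V t \<le> V 0 * exp (- rate * t)"
      using eventually_ge_at_top[of 0] by (rule eventually_mono) (rule decay)
    have "((\<lambda>t. exp (- rate * t)) \<longlongrightarrow> 0) at_top"
      using \<open>0 < rate\<close> by real_asymp
    then show "((\<lambda>t. V 0 * exp (- rate * t)) \<longlongrightarrow> 0) at_top"
      by (rule tendsto_mult_right_zero)
  qed simp
qed

lemma tendsto_equilibrium: "(x \<longlongrightarrow> xs) at_top \<and> (y \<longlongrightarrow> ys) at_top"
proof
  have eventually_pos: "\<forall>\<^sub>F t in at_top. 0 < x t \<and> 0 < y t"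
    using eventually_ge_at_top[of 0] by (rule eventually_mono) (rule solution_pos)
  have "((\<lambda>t. volterra xs (x t)) \<longlongrightarrow> 0) at_top"
  proof (rule real_tendsto_sandwich[OF _ _ tendsto_const])
    show "\<forall>\<^sub>F t in at_top. 0 \<le> volterra xs (x t)" "\<forall>\<^sub>F t in at_top. volterra xs (x t) \<le> V t / g"
      using eventually_pos by (auto elim!: eventually_mono intro: volterra_le_V)
    show "((\<lambda>t. V t / g) \<longlongrightarrow> 0) at_top"
      using V_tendsto_0 by (rule tendsto_divide_zero)
  qed
  then show "(x \<longlongrightarrow> xs) at_top"
    using xs_pos eventually_pos by (auto intro: tendsto_of_volterra_tendsto_0 elim: eventually_mono)
  have "((\<lambda>t. volterra ys (y t)) \<longlongrightarrow> 0) at_top"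
  proof (rule real_tendsto_sandwich[OF _ _ tendsto_const V_tendsto_0])
    show "\<forall>\<^sub>F t in at_top. 0 \<le> volterra ys (y t)" "\<forall>\<^sub>F t in at_top. volterra ys (y t) \<le> V t"
      using eventually_pos by (auto elim!: eventually_mono intro: volterra_le_V)
  qed
  then show "(y \<longlongrightarrow> ys) at_top"
    using ys_pos eventually_pos by (auto intro: tendsto_of_volterra_tendsto_0 elim: eventually_mono)
qed

end

lemma quadratic_form_coercive:
  fixes p Q r :: real
  assumes "0 < Q" "0 < r" "Q^2 < p * r"
  obtains \<epsilon> where "0 < \<epsilon>"
    "\<And>u w q r'. \<bar>q\<bar> \<le> 2 * Q \<Longrightarrow> r \<le> r' \<Longrightarrow> \<epsilon> * (u^2 + w^2) \<le> p * u^2 + q * u * w + r' * w^2"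
proof -
  have "Q / r < p / Q"
    using assms by (simp add: field_simps power2_eq_square)
  then obtain \<sigma> where \<sigma>: "Q / r < \<sigma>" "\<sigma> < p / Q"
    using dense by blast
  have "0 < \<sigma>"
    using \<sigma>(1) assms by (smt (verit) divide_pos_pos)
  have "Q * \<sigma> < p"
    using \<sigma>(2) assms(1) by (simp add: field_simps)
  have "Q / \<sigma> < r"
    using \<sigma>(1) assms(2) \<open>0 < \<sigma>\<close> by (simp add: field_simps)
  define \<epsilon> where "\<epsilon> = min (p - Q * \<sigma>) (r - Q / \<sigma>)"
  have "\<epsilon> * (u^2 + w^2) \<le> p * u^2 + q * u * w + r' * w^2"
    if q: "\<bar>q\<bar> \<le> 2 * Q" and r': "r \<le> r'" for u w q r' :: real
  proof -
    have "0 \<le> (\<sigma> * \<bar>u\<bar> - \<bar>w\<bar>)^2"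
      by simp
    also have "\<dots> = \<sigma> * (\<sigma> * u^2 + w^2 / \<sigma> - 2 * \<bar>u * w\<bar>)"
      using \<open>0 < \<sigma>\<close> by (simp add: power2_eq_square algebra_simps abs_mult)
    finally have "2 * \<bar>u * w\<bar> \<le> \<sigma> * u^2 + w^2 / \<sigma>"
      using \<open>0 < \<sigma>\<close> by (simp add: zero_le_mult_iff)
    have "- (q * u * w) \<le> \<bar>q\<bar> * \<bar>u * w\<bar>"
      by (metis abs_ge_minus_self abs_mult mult.assoc)
    also have "\<dots> \<le> 2 * Q * \<bar>u * w\<bar>"
      using q by (rule mult_right_mono) simp
    also have "\<dots> \<le> Q * (\<sigma> * u^2 + w^2 / \<sigma>)"
      using \<open>2 * \<bar>u * w\<bar> \<le> _\<close> assms(1) by (simp add: mult_left_mono flip: mult.assoc)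
    finally have "- (q * u * w) \<le> Q * \<sigma> * u^2 + Q / \<sigma> * w^2"
      by (simp add: algebra_simps)
    moreover have "r * w^2 \<le> r' * w^2"
      using r' by (simp add: mult_right_mono)
    moreover have "\<epsilon> * u^2 \<le> (p - Q * \<sigma>) * u^2" "\<epsilon> * w^2 \<le> (r - Q / \<sigma>) * w^2"
      unfolding \<epsilon>_def by (simp_all add: mult_right_mono)
    ultimately show ?thesis
      by (simp add: algebra_simps)
  qed
  moreover have "0 < \<epsilon>"
    using \<open>Q * \<sigma> < p\<close> \<open>Q / \<sigma> < r\<close> by (simp add: \<epsilon>_def)
  ultimately show ?thesis
    using that by blast
qed

lemma pos_equilibriumD:
  assumes "pos_equilibrium a b c k m xs ys" "0 < b"
  shows "0 < xs" "0 < ys" "xs + c * ys = 1" "ys + a * xs + m * xs * ys = 1 / (1 + k * xs)"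
  using assms by (auto simp: pos_equilibrium_def fx_def fy_def)

lemma fx_eq_deviation:
  assumes "xs + c * ys = 1"
  shows "fx a b c k m X Y = - b * X * ((X - xs) + c * (Y - ys))"
  using assms by (simp add: fx_def algebra_simps)

lemma fy_eq_deviation:
  assumes "0 \<le> k" "0 \<le> X" "0 \<le> xs" "ys + a * xs + m * xs * ys = 1 / (1 + k * xs)"
  shows "fy a b c k m X Y =
    - Y * ((a + m * ys + k / ((1 + k * X) * (1 + k * xs))) * (X - xs) + (1 + m * X) * (Y - ys))"
proof -
  have "0 < 1 + k * X" "0 < 1 + k * xs"
    using assms(1-3) by (simp_all add: add_pos_nonneg)
  then have "1 / (1 + k * xs) - 1 / (1 + k * X) = k / ((1 + k * X) * (1 + k * xs)) * (X - xs)"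
    by (simp add: field_simps)
  then show ?thesis
    using assms(4) by (simp add: fy_def algebra_simps)
qed

lemma c_mult_cross_coeff_eq:
  fixes a c k m xs ys :: real
  assumes "0 \<le> k" "0 < xs" "xs + c * ys = 1" "ys + a * xs + m * xs * ys = 1 / (1 + k * xs)"
  shows "c * (a + m * ys + k / (1 + k * xs)) = 1 - (1 - c) / xs"
proof -
  have "0 < 1 + k * xs"
    using assms(1,2) by (simp add: add_pos_nonneg)
  then have "xs * (k / (1 + k * xs)) = 1 - 1 / (1 + k * xs)"
    by (simp add: field_simps)
  then have "a * xs + m * xs * ys + xs * (k / (1 + k * xs)) = 1 - ys"
    using assms(4) by linarith
  have "xs * (c * (a + m * ys + k / (1 + k * xs))) = c * (a * xs + m * xs * ys + xs * (k / (1 + k * xs)))"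
    by (simp add: algebra_simps)
  also have "\<dots> = c * (1 - ys)"
    using \<open>a * xs + m * xs * ys + xs * (k / (1 + k * xs)) = 1 - ys\<close> by simp
  also have "\<dots> = xs - (1 - c)"
    using assms(3) by (simp add: algebra_simps)
  finally show ?thesis
    using assms(2) by (simp add: field_simps)
qed

lemma volterra_dissipation:
  fixes a b c k m xs ys :: real
  assumes "0 < a" "0 < b" "0 < c" "0 < k" "0 < m" "c < 1" "pos_equilibrium a b c k m xs ys"
  obtains g \<epsilon> where "0 < g" "0 < \<epsilon>"
    "\<And>X Y. 0 < X \<Longrightarrow> 0 < Y \<Longrightarrow>
      g * fx a b c k m X Y * (X - xs) / X + fy a b c k m X Y * (Y - ys) / Y
        \<le> - \<epsilon> * ((X - xs)^2 + (Y - ys)^2)"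
proof -
  note equilibrium = pos_equilibriumD[OF assms(7,2)]
  define D where "D = a + m * ys + k / (1 + k * xs)"
  have "0 < 1 + k * xs"
    using assms(4) equilibrium(1) by (simp add: add_pos_nonneg)
  then have "0 < D"
    using assms(1,4,5) equilibrium(2) by (simp add: D_def add_pos_nonneg)
  have "c * D < 1"
    using c_mult_cross_coeff_eq[of k xs c ys a m] assms(4,6) equilibrium by (simp add: D_def)
  then have "D^2 < D / c * 1"
    using \<open>0 < D\<close> assms(3) by (simp add: field_simps power2_eq_square)
  then obtain \<epsilon> where "0 < \<epsilon>" and coercive: "\<And>u w q r'. \<bar>q\<bar> \<le> 2 * D \<Longrightarrow> 1 \<le> r' \<Longrightarrow>
      \<epsilon> * (u^2 + w^2) \<le> D / c * u^2 + q * u * w + r' * w^2"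
    using quadratic_form_coercive[of D 1 "D / c"] \<open>0 < D\<close> by auto
  have "D / (c * b) * fx a b c k m X Y * (X - xs) / X + fy a b c k m X Y * (Y - ys) / Y
      \<le> - \<epsilon> * ((X - xs)^2 + (Y - ys)^2)" if "0 < X" "0 < Y" for X Y
  proof -
    define K where "K = k / ((1 + k * X) * (1 + k * xs))"
    have "0 \<le> K"
      using assms(4) \<open>0 < X\<close> \<open>0 < 1 + k * xs\<close> by (simp add: K_def add_pos_nonneg)
    moreover have "K \<le> k / (1 + k * xs)"
      unfolding K_def using assms(4) \<open>0 < X\<close> \<open>0 < 1 + k * xs\<close>
      by (intro divide_left_mono) (auto simp: add_pos_nonneg)
    ultimately have q: "\<bar>D + a + m * ys + K\<bar> \<le> 2 * D"
      using assms(1,5) equilibrium(2) by (simp add: D_def)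
    have r': "1 \<le> 1 + m * X"
      using assms(5) \<open>0 < X\<close> by simp
    have fx_eq: "fx a b c k m X Y = - b * X * ((X - xs) + c * (Y - ys))"
      by (rule fx_eq_deviation[OF equilibrium(3)])
    have fy_eq: "fy a b c k m X Y = - Y * ((a + m * ys + K) * (X - xs) + (1 + m * X) * (Y - ys))"
      unfolding K_def using assms(4) \<open>0 < X\<close> equilibrium(1,4) by (intro fy_eq_deviation) auto
    have "D / (c * b) * fx a b c k m X Y * (X - xs) / X + fy a b c k m X Y * (Y - ys) / Y
        = - (D / c * (X - xs)^2 + (D + a + m * ys + K) * (X - xs) * (Y - ys) + (1 + m * X) * (Y - ys)^2)"
      unfolding fx_eq fy_eq using assms(2,3) \<open>0 < X\<close> \<open>0 < Y\<close> by (simp add: field_simps power2_eq_square)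
    then show ?thesis
      using coercive[OF q r', of "X - xs" "Y - ys"] by linarith
  qed
  moreover have "0 < D / (c * b)"
    using \<open>0 < D\<close> assms(2,3) by simp
  ultimately show ?thesis
    using that \<open>0 < \<epsilon>\<close> by blast
qed

theorem theorem7:
  fixes a b c k m xs ys :: real
  assumes "a > 0" "b > 0" "c > 0" "k > 0" "m > 0"
    and "c < 1" and "k < 1 / a - 1"
    and "pos_equilibrium a b c k m xs ys"
    and "stable_node a b c k m xs ys"
  shows "\<forall>x y. is_solution a b c k m x y \<and> x 0 > 0 \<and> y 0 > 0 \<longrightarrow>
           (x \<longlongrightarrow> xs) at_top \<and> (y \<longlongrightarrow> ys) at_top"
proof (intro allI impI)
  fix x y :: "real \<Rightarrow> real"
  assume solution: "is_solution a b c k m x y \<and> x 0 > 0 \<and> y 0 > 0"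
  obtain g \<epsilon> where "0 < g" "0 < \<epsilon>" and dissipative: "\<And>X Y. 0 < X \<Longrightarrow> 0 < Y \<Longrightarrow>
      g * fx a b c k m X Y * (X - xs) / X + fy a b c k m X Y * (Y - ys) / Y
        \<le> - \<epsilon> * ((X - xs)^2 + (Y - ys)^2)"
    using volterra_dissipation[OF assms(1-6,8)] by blast
  interpret volterra_dissipative_solution "fx a b c k m" "fy a b c k m" x y xs ys g \<epsilon>
  proof
    show "0 < xs" "0 < ys"
      using pos_equilibriumD[OF assms(8,2)] by simp_all
  qed (use solution \<open>0 < g\<close> \<open>0 < \<epsilon>\<close> dissipative in \<open>auto simp: is_solution_def\<close>)
  show "(x \<longlongrightarrow> xs) at_top \<and> (y \<longlongrightarrow> ys) at_top"
    by (rule tendsto_equilibrium)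
qed

end
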